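(* Let $(a_n)_{n\in\mathbb{Z}}$ be the Somos-4 sequence, i.e. the unique sequence of positive rational numbers with $a_0=a_1=a_2=a_3=1$ and $$a_n\,a_{n-4}=a_{n-1}\,a_{n-3}+a_{n-2}^2\quad\text{for all } n\in\mathbb{Z}.$$ Then for all integers $s,t,u,v,w,x,y,z$, writing $(r_1,r_2,r_3,r_4)=(s,t,u,v)$ and $(c_1,c_2,c_3,c_4)=(w,x,y,z)$, the $4\times 4$ determinant $$\det\left[a_{r_i-c_j}\,a_{r_i+c_j}\right]_{1\le i,j\le 4}$$ is equal to $0$.
   Context: The sequence is extended to negative indices by the same recurrence (run backwards); all terms are positive, so it is well defined (e.g. $a_{-1}=2$, $a_4=2$, $a_5=3$, $a_6=7$, and $a_{3-n}=a_n$). The $(i,j)$ entry of the matrix is the product $a_{r_i-c_j}\,a_{r_i+c_j}$. *)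

theory Defs
  imports "Jordan_Normal_Form.Determinant"
begin

definition is_somos4 :: "(int \<Rightarrow> rat) \<Rightarrow> bool" where
  "is_somos4 a \<longleftrightarrow>
     (\<forall>n. a n > 0) \<and> a 0 = 1 \<and> a 1 = 1 \<and> a 2 = 1 \<and> a 3 = 1 \<and>
     (\<forall>n. a n * a (n - 4) = a (n - 1) * a (n - 3) + (a (n - 2))^2)"

end

theory Submission
  imports Defs
begin

text \<open>For fixed \<open>k\<close>, the sequence \<open>f\<^sub>k(n) = a(n+k) a(n-k)\<close> is a linear combination
  \<open>A\<^sub>k u(n) + B\<^sub>k w(n)\<close> of \<open>u(n) = a(n+1) a(n-1)\<close> and \<open>w(n) = a(n)\<^sup>2\<close>, so the matrix is the
  product of a \<open>4 \<times> 2\<close> and a \<open>2 \<times> 4\<close> matrix and is singular. By the identity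
  \<open>f\<^sub>k\<^sub>+\<^sub>1(n) f\<^sub>k\<^sub>-\<^sub>1(n) = f\<^sub>k(n+1) f\<^sub>k(n-1)\<close>, the recurrence and the conserved quantity
  \<open>(a(n+2) a(n-1)\<^sup>2 + a(n+1)\<^sup>2 a(n-2) + a(n)\<^sup>3) / (a(n+1) a(n) a(n-1)) = 4\<close>, the product
  \<open>f\<^sub>k\<^sub>+\<^sub>1(n) f\<^sub>k\<^sub>-\<^sub>1(n)\<close> is a binary quadratic form in \<open>(u(n), w(n))\<close>. This form is divisible
  by the linear form of \<open>f\<^sub>k\<^sub>-\<^sub>1\<close>, and the quotient is the linear form of \<open>f\<^sub>k\<^sub>+\<^sub>1\<close>; the
  divisibility for the next step is carried along the induction.\<close>

definition centred_prod :: "(int \<Rightarrow> 'a::times) \<Rightarrow> int \<Rightarrow> int \<Rightarrow> 'a" where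
  "centred_prod a k n = a (n + k) * a (n - k)"

lemma centred_prod_uminus [simp]:
  fixes a :: "int \<Rightarrow> 'a::ab_semigroup_mult"
  shows "centred_prod a (- k) n = centred_prod a k n"
  unfolding centred_prod_def by (simp add: mult.commute)

lemma centred_prod_shift:
  fixes a :: "int \<Rightarrow> 'a::ab_semigroup_mult"
  shows "centred_prod a (k + 1) n * centred_prod a (k - 1) n
       = centred_prod a k (n + 1) * centred_prod a k (n - 1)"
  unfolding centred_prod_def by (simp add: algebra_simps)

definition somos4_invariant :: "(int \<Rightarrow> 'a::field) \<Rightarrow> int \<Rightarrow> 'a" where
  "somos4_invariant a n =
     (a (n + 2) * a (n - 1)^2 + a (n + 1)^2 * a (n - 2) + a n ^ 3) / (a (n + 1) * a n * a (n - 1))"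

lemma somos4_invariant_Suc:
  fixes a :: "int \<Rightarrow> 'a::field"
  assumes nz: "\<And>n. a n \<noteq> 0"
    and rec: "\<And>n. a (n + 2) * a (n - 2) = a (n + 1) * a (n - 1) + a n ^ 2"
  shows "somos4_invariant a (n + 1) = somos4_invariant a n"
proof -
  have forward: "a (n + 3) = (a (n + 2) * a n + a (n + 1)^2) / a (n - 1)"
    using rec[of "n + 1"] nz[of "n - 1"] by (simp add: field_simps)
  have backward: "a (n - 2) = (a (n + 1) * a (n - 1) + a n ^ 2) / a (n + 2)"
    using rec[of n] nz[of "n + 2"] by (simp add: field_simps)
  have "somos4_invariant a (n + 1) =
      (a (n + 3) * a n ^ 2 + a (n + 2)^2 * a (n - 1) + a (n + 1)^3) / (a (n + 2) * a (n + 1) * a n)"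
    unfolding somos4_invariant_def by (simp add: add.assoc)
  also have "\<dots> = somos4_invariant a n"
    unfolding somos4_invariant_def forward backward using nz
    by (simp add: field_simps) (simp add: algebra_simps power2_eq_square power3_eq_cube)
  finally show ?thesis .
qed

lemma somos4_invariant_const:
  fixes a :: "int \<Rightarrow> 'a::field"
  assumes "\<And>n. a n \<noteq> 0"
    and "\<And>n. a (n + 2) * a (n - 2) = a (n + 1) * a (n - 1) + a n ^ 2"
  shows "somos4_invariant a n = somos4_invariant a 0"
proof (induction n rule: int_induct[where k = 0])
  case (step1 i)
  then show ?case using somos4_invariant_Suc[OF assms, of i] by simp
next
  case (step2 i)
  then show ?case using somos4_invariant_Suc[OF assms, of "i - 1"] by simp
qed simp

text \<open>If \<open>g(n) = A u(n) + B w(n)\<close>, then \<open>g(n+1) g(n-1) = shift_form A B (u n) (w n)\<close>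
  (lemma \<open>centred_prod_span_shift\<close>).\<close>

definition shift_form :: "'a::comm_ring_1 \<Rightarrow> 'a \<Rightarrow> 'a \<Rightarrow> 'a \<Rightarrow> 'a" where
  "shift_form A B U W = B^2 * U^2 + (A^2 + 4 * A * B) * U * W + (A^2 - A * B) * W^2"

lemma shift_form_swap: "shift_form C D B (- A) = shift_form A B D (- C)"
  unfolding shift_form_def by (simp add: algebra_simps power2_eq_square)

lemma binary_quadratic_form_eq_0:
  fixes \<alpha> \<beta> \<gamma> p q :: "'a::idom"
  defines "Q \<equiv> \<lambda>U W. \<alpha> * U^2 + \<beta> * U * W + \<gamma> * W^2"
  assumes "Q 2 1 = 0" "Q 1 1 = 0" "Q p q = 0" "p \<noteq> q" "p \<noteq> 2 * q"
  shows "Q U W = 0"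
proof -
  have at_2_1: "4 * \<alpha> + 2 * \<beta> + \<gamma> = 0" and at_1_1: "\<alpha> + \<beta> + \<gamma> = 0"
    using assms(2,3) unfolding Q_def by (simp_all add: power2_eq_square mult.commute)
  have "3 * \<alpha> + \<beta> = (4 * \<alpha> + 2 * \<beta> + \<gamma>) - (\<alpha> + \<beta> + \<gamma>)"
    by (simp add: algebra_simps)
  then have \<beta>: "\<beta> = - 3 * \<alpha>"
    unfolding at_2_1 at_1_1 by (simp add: eq_neg_iff_add_eq_0 add.commute)
  have \<gamma>: "\<gamma> = 2 * \<alpha>"
    using at_1_1 unfolding \<beta> by (simp add: algebra_simps eq_neg_iff_add_eq_0)
  have "\<alpha> * ((p - q) * (p - 2 * q)) = 0"
    using assms(4) unfolding Q_def \<beta> \<gamma> by (simp add: algebra_simps power2_eq_square)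
  then have "\<alpha> = 0" using assms(5,6) by simp
  then show ?thesis unfolding Q_def \<beta> \<gamma> by simp
qed

lemma shift_form_factor:
  fixes A B A' B' C D :: "'a::idom"
  assumes "A' + B' \<noteq> 0" "2 * A' + B' \<noteq> 0"
    and "shift_form A B 2 1 = (2 * A' + B') * (2 * C + D)"
    and "shift_form A B 1 1 = (A' + B') * (C + D)"
    and "shift_form A B B' (- A') = 0"
  shows "shift_form A B U W = (A' * U + B' * W) * (C * U + D * W)"
proof -
  have "(B^2 - A' * C) * U^2 + (A^2 + 4 * A * B - A' * D - B' * C) * U * W
        + (A^2 - A * B - B' * D) * W^2 = 0"
  proof (rule binary_quadratic_form_eq_0[where p = B' and q = "- A'"])
    show "B' \<noteq> - A'" "B' \<noteq> 2 * - A'"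
      using assms(1,2) by (auto simp: algebra_simps)
  qed (use assms(3-5) in \<open>simp_all add: shift_form_def algebra_simps power2_eq_square\<close>)
  then show ?thesis
    unfolding shift_form_def by (simp add: algebra_simps power2_eq_square)
qed

text \<open>For the Somos-4 sequence \<open>(u(n), w(n))\<close> is \<open>(2, 1)\<close> at \<open>n = 0\<close> and \<open>(1, 1)\<close> at \<open>n = 1\<close>,
  so these are the only coefficients that can work.\<close>

definition coeff_A :: "(int \<Rightarrow> 'a::comm_ring_1) \<Rightarrow> int \<Rightarrow> 'a" where
  "coeff_A a k = centred_prod a k 0 - centred_prod a k 1"

definition coeff_B :: "(int \<Rightarrow> 'a::comm_ring_1) \<Rightarrow> int \<Rightarrow> 'a" where
  "coeff_B a k = 2 * centred_prod a k 1 - centred_prod a k 0"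

lemma coeff_A_B_eval:
  "2 * coeff_A a k + coeff_B a k = centred_prod a k 0"
  "coeff_A a k + coeff_B a k = centred_prod a k 1"
  unfolding coeff_A_def coeff_B_def by simp_all

lemma coeff_A_B_uminus [simp]:
  fixes a :: "int \<Rightarrow> 'a::comm_ring_1"
  shows "coeff_A a (- k) = coeff_A a k" "coeff_B a (- k) = coeff_B a k"
  unfolding coeff_A_def coeff_B_def by simp_all

context
  fixes a :: "int \<Rightarrow> rat"
  assumes somos: "is_somos4 a"
begin

lemma somos4_pos: "a n > 0"
  using somos unfolding is_somos4_def by blast

lemma somos4_rec: "a (n + 2) * a (n - 2) = a (n + 1) * a (n - 1) + a n ^ 2"
proof -
  have "a m * a (m - 4) = a (m - 1) * a (m - 3) + a (m - 2) ^ 2" for m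
    using somos unfolding is_somos4_def by blast
  from this[of "n + 2"] show ?thesis by (simp add: algebra_simps)
qed

lemma somos4_initial: "a (- 1) = 2" "a 0 = 1" "a 1 = 1" "a 2 = 1" "a 3 = 1"
proof -
  show a0123: "a 0 = 1" "a 1 = 1" "a 2 = 1" "a 3 = 1"
    using somos unfolding is_somos4_def by auto
  show "a (- 1) = 2"
    using somos4_rec[of 1] a0123 by simp
qed

lemma centred_prod_pos: "centred_prod a k n > 0"
  unfolding centred_prod_def using somos4_pos by simp

lemma centred_prod_initial:
  "centred_prod a 1 0 = 2" "centred_prod a 0 0 = 1" "centred_prod a 1 1 = 1" "centred_prod a 0 1 = 1"
  unfolding centred_prod_def using somos4_initial by simp_all

lemma somos4_invariant_eq:
  "a (n + 2) * a (n - 1)^2 + a (n + 1)^2 * a (n - 2) + a n ^ 3 = 4 * a (n + 1) * a n * a (n - 1)"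
proof -
  have nz: "a m \<noteq> 0" for m
    using somos4_pos[of m] by simp
  have "somos4_invariant a n = somos4_invariant a 1"
    using somos4_invariant_const[OF nz somos4_rec] by metis
  also have "\<dots> = 4"
    unfolding somos4_invariant_def using somos4_initial by simp
  finally show ?thesis
    unfolding somos4_invariant_def using nz[of n] nz[of "n + 1"] nz[of "n - 1"]
    by (simp add: field_simps)
qed

lemma centred_prod_span_shift:
  assumes span: "\<And>n. g n = A * centred_prod a 1 n + B * centred_prod a 0 n"
  shows "g (n + 1) * g (n - 1) = shift_form A B (centred_prod a 1 n) (centred_prod a 0 n)"
proof -
  let ?u = "centred_prod a 1" and ?w = "centred_prod a 0"
  have u_succ: "?u (n + 1) = a (n + 2) * a n" and u_pred: "?u (n - 1) = a n * a (n - 2)"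
    unfolding centred_prod_def by (simp_all add: algebra_simps)
  have uu: "?u (n + 1) * ?u (n - 1) = ?w n * (?u n + ?w n)"
    unfolding u_succ u_pred using somos4_rec[of n]
    by (simp add: centred_prod_def algebra_simps power2_eq_square)
  have ww: "?w (n + 1) * ?w (n - 1) = ?u n ^ 2"
    using centred_prod_shift[of a 0 n] by (simp add: power2_eq_square)
  have uw: "?u (n + 1) * ?w (n - 1) + ?w (n + 1) * ?u (n - 1) = 4 * ?u n * ?w n - ?w n ^ 2"
  proof -
    have "?u (n + 1) * ?w (n - 1) + ?w (n + 1) * ?u (n - 1)
        = a n * (a (n + 2) * a (n - 1)^2 + a (n + 1)^2 * a (n - 2))"
      unfolding u_succ u_pred by (simp add: centred_prod_def algebra_simps power2_eq_square)
    also have "\<dots> = a n * (4 * a (n + 1) * a n * a (n - 1) - a n ^ 3)"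
      using somos4_invariant_eq[of n] by (simp add: eq_diff_eq)
    finally show ?thesis
      by (simp add: centred_prod_def algebra_simps power2_eq_square power3_eq_cube)
  qed
  have "g (n + 1) * g (n - 1)
      = A^2 * (?u (n + 1) * ?u (n - 1)) + A * B * (?u (n + 1) * ?w (n - 1) + ?w (n + 1) * ?u (n - 1))
        + B^2 * (?w (n + 1) * ?w (n - 1))"
    unfolding span by (simp add: algebra_simps power2_eq_square)
  also have "\<dots> = shift_form A B (?u n) (?w n)"
    unfolding uu ww uw shift_form_def by (simp add: algebra_simps power2_eq_square)
  finally show ?thesis .
qed

text \<open>The point \<open>(B\<^sub>k, -A\<^sub>k)\<close> is the zero of the linear form \<open>A\<^sub>k U + B\<^sub>k W\<close> of step \<open>k\<close>,
  so the last hypothesis says that this form divides the quadratic form of step \<open>k + 1\<close>.\<close>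

lemma centred_prod_span_Suc2:
  assumes span_k: "\<And>n. centred_prod a k n = coeff_A a k * centred_prod a 1 n + coeff_B a k * centred_prod a 0 n"
    and span_k1: "\<And>n. centred_prod a (k + 1) n
                     = coeff_A a (k + 1) * centred_prod a 1 n + coeff_B a (k + 1) * centred_prod a 0 n"
    and divides: "shift_form (coeff_A a (k + 1)) (coeff_B a (k + 1)) (coeff_B a k) (- coeff_A a k) = 0"
  shows "centred_prod a (k + 2) n
           = coeff_A a (k + 2) * centred_prod a 1 n + coeff_B a (k + 2) * centred_prod a 0 n"
    and "shift_form (coeff_A a (k + 2)) (coeff_B a (k + 2)) (coeff_B a (k + 1)) (- coeff_A a (k + 1)) = 0"
proof -
  let ?A = "coeff_A a k" and ?B = "coeff_B a k"
  let ?A1 = "coeff_A a (k + 1)" and ?B1 = "coeff_B a (k + 1)"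
  let ?A2 = "coeff_A a (k + 2)" and ?B2 = "coeff_B a (k + 2)"
  let ?u = "centred_prod a 1" and ?w = "centred_prod a 0"
  have prod: "centred_prod a (k + 2) m * centred_prod a k m = shift_form ?A1 ?B1 (?u m) (?w m)" for m
    using centred_prod_shift[of a "k + 1" m] centred_prod_span_shift[OF span_k1, of m]
    by (simp add: add.assoc)
  have factor: "shift_form ?A1 ?B1 U W = (?A * U + ?B * W) * (?A2 * U + ?B2 * W)" for U W
  proof (rule shift_form_factor[OF _ _ _ _ divides])
    show "?A + ?B \<noteq> 0" "2 * ?A + ?B \<noteq> 0"
      using centred_prod_pos[of k 1] centred_prod_pos[of k 0] by (simp_all add: coeff_A_B_eval)
    show "shift_form ?A1 ?B1 2 1 = (2 * ?A + ?B) * (2 * ?A2 + ?B2)"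
      using prod[of 0] by (simp add: coeff_A_B_eval centred_prod_initial mult.commute)
    show "shift_form ?A1 ?B1 1 1 = (?A + ?B) * (?A2 + ?B2)"
      using prod[of 1] by (simp add: coeff_A_B_eval centred_prod_initial mult.commute)
  qed
  have "centred_prod a (k + 2) n * centred_prod a k n
      = (?A2 * ?u n + ?B2 * ?w n) * centred_prod a k n"
    unfolding prod factor span_k[of n, symmetric] by (simp add: mult.commute)
  then show "centred_prod a (k + 2) n = ?A2 * ?u n + ?B2 * ?w n"
    using centred_prod_pos[of k n] by simp
  have "shift_form ?A2 ?B2 ?B1 (- ?A1) = shift_form ?A1 ?B1 ?B2 (- ?A2)"
    by (rule shift_form_swap)
  also have "\<dots> = 0"
    unfolding factor by simp
  finally show "shift_form ?A2 ?B2 ?B1 (- ?A1) = 0" .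
qed

lemma centred_prod_span_nat:
  "(\<forall>n. centred_prod a (int m) n
         = coeff_A a (int m) * centred_prod a 1 n + coeff_B a (int m) * centred_prod a 0 n)
   \<and> (\<forall>n. centred_prod a (int m + 1) n
         = coeff_A a (int m + 1) * centred_prod a 1 n + coeff_B a (int m + 1) * centred_prod a 0 n)
   \<and> shift_form (coeff_A a (int m + 1)) (coeff_B a (int m + 1)) (coeff_B a (int m)) (- coeff_A a (int m)) = 0"
proof (induction m)
  case 0
  have "coeff_A a 0 = 0" "coeff_B a 0 = 1" "coeff_A a 1 = 1" "coeff_B a 1 = 0"
    unfolding coeff_A_def coeff_B_def centred_prod_def using somos4_initial by simp_all
  then show ?case
    by (simp add: shift_form_def)
next
  case (Suc m)
  have k: "int (Suc m) = int m + 1" and k1: "int m + 1 + 1 = int m + 2"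
    by simp_all
  show ?case
    unfolding k k1 using Suc.IH centred_prod_span_Suc2[of "int m"] by blast
qed

lemma centred_prod_span:
  "centred_prod a k n = coeff_A a k * centred_prod a 1 n + coeff_B a k * centred_prod a 0 n"
proof (cases "k \<ge> 0")
  case True
  then show ?thesis
    using centred_prod_span_nat[of "nat k"] by simp
next
  case False
  then show ?thesis
    using centred_prod_span_nat[of "nat (- k)"] centred_prod_uminus[of a k]
    by (metis coeff_A_B_uminus nat_0_le neg_0_le_iff_le nle_le)
qed

end

lemma det_mat_sum_of_two_products:
  fixes p q c d :: "nat \<Rightarrow> 'a::comm_ring_1"
  assumes "2 < n"
  shows "det (mat n n (\<lambda>(i, j). p i * c j + q i * d j)) = 0"
proof -
  define P where "P = mat n n (\<lambda>(i, j). if j = 0 then p i else if j = 1 then q i else 0)"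
  define Q where "Q = mat n n (\<lambda>(i, j). if i = 0 then c j else if i = 1 then d j else 0)"
  have "mat n n (\<lambda>(i, j). p i * c j + q i * d j) = P * Q"
  proof (rule eq_matI)
    fix i j
    assume "i < dim_row (P * Q)" "j < dim_col (P * Q)"
    then have ij: "i < n" "j < n"
      by (simp_all add: P_def Q_def)
    have "(P * Q) $$ (i, j) = (\<Sum>k<n. P $$ (i, k) * Q $$ (k, j))"
      using ij by (simp add: P_def Q_def scalar_prod_def atLeast0LessThan)
    also have "\<dots> = (\<Sum>k\<in>{0, 1}. P $$ (i, k) * Q $$ (k, j))"
      by (rule sum.mono_neutral_right) (use assms ij in \<open>auto simp: P_def Q_def\<close>)
    finally show "mat n n (\<lambda>(i, j). p i * c j + q i * d j) $$ (i, j) = (P * Q) $$ (i, j)"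
      using ij assms by (simp add: P_def Q_def)
  qed (simp_all add: P_def Q_def)
  moreover have "det Q = 0"
  proof -
    have "Q = mat\<^sub>r n n (\<lambda>i. if i = 2 then 0\<^sub>v n else row Q i)"
      by (rule eq_matI) (auto simp: Q_def)
    also have "det \<dots> = 0"
      by (rule det_row_0) (use assms in \<open>auto simp: Q_def\<close>)
    finally show ?thesis .
  qed
  moreover have "det (P * Q) = det P * det Q"
    by (rule det_mult) (auto simp: P_def Q_def)
  ultimately show ?thesis
    by simp
qed

theorem corollary4:
  fixes a :: "int \<Rightarrow> rat" and s t u v w x y z :: int
  assumes "is_somos4 a"
  shows "det (mat 4 4 (\<lambda>(i, j). let r = [s, t, u, v] ! i; c = [w, x, y, z] ! j
                                in a (r - c) * a (r + c))) = 0"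
proof -
  have entry: "a (r - c) * a (r + c)
      = centred_prod a 1 r * coeff_A a c + centred_prod a 0 r * coeff_B a c" for r c
    using centred_prod_span[OF assms, of c r] by (simp add: centred_prod_def mult.commute)
  show ?thesis
    unfolding Let_def entry by (rule det_mat_sum_of_two_products) simp
qed

end
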